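(* Let $p$ be a prime and $k,\ell,m$ integers with $k>0$ and $\ell,m\ge0$; put $q=p^k$, $Q=p^{\ell}$, $R=p^m$, and \[ f_5(X)=X^{qQ+q}-X^{qQ+1}-X^{Q+q}+X^{Q+1}+X^{q^2R}+X^{qR}+X^{R}. \] Then $f_5(X)$ permutes $\mathbb{F}_{q^3}$ if and only if $\gcd(q-1,Q+1)=1$, or equivalently, if and only if $p=2$ and $\operatorname{ord}_2(k)\le\operatorname{ord}_2(\ell)$.
   Context: A polynomial permutes $\mathbb{F}_{q^3}$ if the induced map $\mathbb{F}_{q^3}\to\mathbb{F}_{q^3}$ is a bijection. For a nonzero integer $N$, $\operatorname{ord}_2(N)$ is the largest integer $s\ge0$ with $2^s\mid N$, and $\operatorname{ord}_2(0)=\infty$. *)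

theory Defs
  imports "HOL-Computational_Algebra.Computational_Algebra" "HOL-Library.Extended_Nat"
begin

definition ord2 :: "nat \<Rightarrow> enat" where
  "ord2 n = (if n = 0 then \<infinity> else enat (multiplicity (2::nat) n))"

definition f5 :: "nat \<Rightarrow> nat \<Rightarrow> nat \<Rightarrow> 'a::field \<Rightarrow> 'a" where
  "f5 q Q R x = x ^ (q*Q + q) - x ^ (q*Q + 1) - x ^ (Q + q) + x ^ (Q + 1)
               + x ^ (q^2 * R) + x ^ (q * R) + x ^ R"

end

theory Submission
  imports Defs "HOL-Number_Theory.Residues"
begin

text \<open>
  Write \<open>Y x = x ^ q - x\<close> and \<open>T x = x ^ q\<^sup>2 + x ^ q + x\<close>. Since \<open>Q\<close> and \<open>R\<close> are powers
  of the characteristic, \<open>f5 = Y ^ (Q + 1) + T ^ R\<close>.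

  If \<open>d = gcd (q - 1) (Q + 1) > 1\<close>, take \<open>\<zeta> \<noteq> 1\<close> with \<open>\<zeta> ^ d = 1\<close>, so \<open>\<zeta>\<close> lies in
  the subfield with \<open>q\<close> elements, and \<open>x \<noteq> 0\<close> with \<open>T x = 0\<close> (namely \<open>x = z ^ q - z\<close> with \<open>z ^ q \<noteq> z\<close>). Then
  \<open>f5 (\<zeta> * x) = f5 x\<close>.

  Conversely let \<open>p = 2\<close> and \<open>d = 1\<close>. As \<open>T\<close> takes values in the subfield with \<open>q\<close> elements,
  \<open>f5 x\<^sub>1 = f5 x\<^sub>2\<close> forces \<open>Z\<^sub>i = Y x\<^sub>i ^ (Q + 1)\<close> to have the same
  \<open>Z ^ q - Z\<close> and \<open>Z ^ q\<^sup>2 - Z ^ q\<close>. Because \<open>Y ^ q\<^sup>2 = Y ^ q + Y\<close>, these are the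
  coordinates of \<open>(Y ^ q + Y \<omega>) ^ (Q + 1)\<close> in \<open>F[\<omega>]\<close>, \<open>\<omega>\<^sup>2 + \<omega> + 1 = 0\<close>. Replacing
  \<open>Q = 2 ^ l\<close> by \<open>2 ^ L\<close> with \<open>L\<close> even and \<open>L \<equiv> l mod 3k\<close>, this power map is injective on
  \<open>F[\<omega>]\<close>, because every element there satisfies \<open>z ^ 2 ^ 6k = z\<close> and
  \<open>gcd (2 ^ 6k - 1) (2 ^ L + 1) = 1\<close>. So \<open>Y x\<^sub>1 = Y x\<^sub>2\<close>, hence \<open>T x\<^sub>1 = T x\<^sub>2\<close>,
  and \<open>x\<^sub>1 = x\<^sub>2\<close>.

  Both the gcd criterion and the choice of \<open>L\<close> rest on
  \<open>gcd (2 ^ a - 1) (2 ^ b + 1) = 1 \<longleftrightarrow> 2 ^ ord\<^sub>2 a dvd b\<close>.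
\<close>

section \<open>The 2-adic criterion\<close>

lemma coprime_two_power_minus_one_plus_one:
  fixes s a' b :: nat
  assumes "odd a'" and "2 ^ s dvd b"
  shows "coprime (2 ^ (2 ^ s * a') - 1) (2 ^ b + 1 :: int)"
proof (rule coprimeI)
  fix d :: int
  assume d_minus: "d dvd 2 ^ (2 ^ s * a') - 1" and d_plus: "d dvd 2 ^ b + 1"
  obtain b' where b: "b = 2 ^ s * b'"
    using assms(2) ..
  define u :: int where "u = 2 ^ 2 ^ s"
  have "[u ^ a' = 1] (mod d)"
    using d_minus by (simp add: u_def power_mult cong_iff_dvd_diff)
  from cong_pow[OF this, of b'] have "[u ^ (a' * b') = 1] (mod d)"
    by (simp add: power_mult)
  moreover have "[u ^ b' = -1] (mod d)"
    using d_plus by (simp add: b u_def power_mult cong_iff_dvd_diff)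
  from cong_pow[OF this, of a'] have "[u ^ (a' * b') = -1] (mod d)"
    using \<open>odd a'\<close> by (simp add: mult.commute[of a'] power_mult)
  ultimately have "[1 = -1] (mod d)"
    by (meson cong_sym cong_trans)
  then have "d dvd 2"
    by (simp add: cong_iff_dvd_diff)
  have "odd (2 ^ (2 ^ s * a') - 1 :: int)"
    using \<open>odd a'\<close> by (simp add: odd_pos)
  then have "odd d"
    using d_minus by (meson dvd_trans)
  then show "is_unit d"
    using coprime_common_divisor[of d 2 d] \<open>d dvd 2\<close> by simp
qed

lemma not_coprime_two_power_minus_one_plus_one:
  fixes s a' b' :: nat
  assumes "odd b'"
  shows "\<not> coprime (2 ^ (2 ^ Suc s * a') - 1) (2 ^ (2 ^ s * b') + 1 :: int)"
proof
  assume coprime: "coprime (2 ^ (2 ^ Suc s * a') - 1) (2 ^ (2 ^ s * b') + 1 :: int)"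
  define u :: int where "u = 2 ^ 2 ^ s"
  have minus_one: "[u = -1] (mod u + 1)"
    by (simp add: cong_iff_dvd_diff)
  have "[(u ^ 2) ^ a' = 1] (mod u + 1)"
    using cong_pow[OF cong_pow[OF minus_one, of 2], of a'] by simp
  moreover have "(u ^ 2) ^ a' = 2 ^ (2 ^ Suc s * a')"
    by (simp add: u_def mult_ac flip: power_mult)
  ultimately have "u + 1 dvd 2 ^ (2 ^ Suc s * a') - 1"
    by (simp add: cong_iff_dvd_diff)
  moreover have "[u ^ b' = -1] (mod u + 1)"
    using cong_pow[OF minus_one, of b'] \<open>odd b'\<close> by simp
  then have "u + 1 dvd 2 ^ (2 ^ s * b') + 1"
    by (simp add: u_def cong_iff_dvd_diff power_mult)
  ultimately have "is_unit (u + 1)"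
    using coprime by (rule coprime_common_divisor[rotated])
  moreover have "u \<ge> 2"
    unfolding u_def using self_le_power[of "2::int" "2 ^ s"] by simp
  ultimately show False
    by simp
qed

lemma coprime_two_power_nat_iff_int:
  "coprime (2 ^ a - 1) (2 ^ b + 1 :: nat) \<longleftrightarrow> coprime (2 ^ a - 1) (2 ^ b + 1 :: int)"
  by (simp add: of_nat_diff add.commute flip: coprime_int_iff)

lemma coprime_two_power_iff:
  fixes a b :: nat
  assumes "a > 0"
  shows "coprime (2 ^ a - 1) (2 ^ b + 1 :: nat) \<longleftrightarrow> 2 ^ multiplicity 2 a dvd b"
proof -
  obtain a' where a: "a = 2 ^ multiplicity 2 a * a'" and "odd a'"
    using multiplicity_decompose'[of a 2] assms by auto
  show ?thesis
  proof
    assume coprime_nat: "coprime (2 ^ a - 1) (2 ^ b + 1 :: nat)"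
    show "2 ^ multiplicity 2 a dvd b"
    proof (rule ccontr)
      assume not_dvd: "\<not> 2 ^ multiplicity 2 a dvd b"
      then have "b \<noteq> 0"
        by (metis dvd_0_right)
      obtain b' where b: "b = 2 ^ multiplicity 2 b * b'" and "odd b'"
        using multiplicity_decompose'[of b 2] \<open>b \<noteq> 0\<close> by auto
      have "multiplicity 2 b < multiplicity 2 a"
        using not_dvd \<open>b \<noteq> 0\<close> by (auto simp: power_dvd_iff_le_multiplicity)
      then obtain a'' where a'': "a = 2 ^ Suc (multiplicity 2 b) * a''"
        by (metis a Suc_leI le_imp_power_dvd dvd_mult2 dvdE)
      have "\<not> coprime (2 ^ (2 ^ Suc (multiplicity 2 b) * a'') - 1)
          (2 ^ (2 ^ multiplicity 2 b * b') + 1 :: int)"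
        using \<open>odd b'\<close> by (rule not_coprime_two_power_minus_one_plus_one)
      from this[folded a'' b] coprime_nat show False
        by (simp only: coprime_two_power_nat_iff_int)
    qed
  next
    assume "2 ^ multiplicity 2 a dvd b"
    from coprime_two_power_minus_one_plus_one[OF \<open>odd a'\<close> this, folded a]
    show "coprime (2 ^ a - 1) (2 ^ b + 1 :: nat)"
      by (simp only: coprime_two_power_nat_iff_int)
  qed
qed

lemma ord2_le_iff_dvd:
  "k > 0 \<Longrightarrow> ord2 k \<le> ord2 l \<longleftrightarrow> 2 ^ multiplicity 2 k dvd l"
  by (cases "l = 0") (simp_all add: ord2_def power_dvd_iff_le_multiplicity)

lemma coprime_prime_power_minus_one_plus_one_iff:
  fixes p k l :: nat
  assumes "prime p" and "k > 0"
  shows "coprime (p ^ k - 1) (p ^ l + 1) \<longleftrightarrow> p = 2 \<and> ord2 k \<le> ord2 l"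
proof (cases "p = 2")
  case True
  then show ?thesis
    using assms(2) by (simp only: coprime_two_power_iff ord2_le_iff_dvd simp_thms)
next
  case False
  then have "odd p"
    using prime_ge_2_nat[OF assms(1)] prime_odd_nat[OF assms(1)] by simp
  have "\<not> coprime (p ^ k - 1) (p ^ l + 1)"
  proof
    assume "coprime (p ^ k - 1) (p ^ l + 1)"
    moreover have "2 dvd p ^ k - 1" and "2 dvd p ^ l + 1"
      using \<open>odd p\<close> by simp_all
    ultimately have "is_unit (2::nat)"
      by (rule coprime_common_divisor)
    then show False
      by simp
  qed
  then show ?thesis
    using False by blast
qed

lemma obtain_even_exponent_coprime:
  fixes k l :: nat
  assumes "k > 0" and "coprime (2 ^ k - 1) (2 ^ l + 1 :: nat)"
  obtains L where "even L" and "[L = l] (mod 3 * k)"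
    and "coprime (2 ^ (6 * k) - 1) (2 ^ L + 1 :: nat)"
proof -
  define s where "s = multiplicity 2 k"
  obtain k' where k: "k = 2 ^ s * k'" and "odd k'"
    using multiplicity_decompose'[of k 2] assms(1) unfolding s_def by auto
  have "2 ^ s dvd l"
    using assms unfolding s_def by (simp only: coprime_two_power_iff)
  then obtain l' where l: "l = 2 ^ s * l'" ..
  define L where "L = (if even l' then l else l + 3 * k)"
  have "2 ^ Suc s dvd L"
  proof (cases "even l'")
    case False
    then have "2 * 2 ^ s dvd 2 ^ s * (l' + 3 * k')"
      using \<open>odd k'\<close> by (simp add: mult.commute)
    then show ?thesis
      using False by (simp add: L_def k l algebra_simps)
  qed (auto simp: L_def l)
  then have "coprime (2 ^ (2 ^ Suc s * (3 * k')) - 1) (2 ^ L + 1 :: int)"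
    using \<open>odd k'\<close> by (intro coprime_two_power_minus_one_plus_one) simp_all
  moreover have "2 ^ Suc s * (3 * k') = 6 * k"
    by (simp add: k)
  ultimately have "coprime (2 ^ (6 * k) - 1) (2 ^ L + 1 :: nat)"
    by (simp only: coprime_two_power_nat_iff_int)
  moreover have "even L"
    using \<open>2 ^ Suc s dvd L\<close> by (rule dvd_trans[rotated]) simp
  moreover have "[L = l] (mod 3 * k)"
    by (simp add: L_def cong_def)
  ultimately show ?thesis
    using that by blast
qed

section \<open>Adjoining a primitive cube root of unity\<close>

lemma inj_power_if_coprime:
  fixes e N :: nat
  assumes period: "\<And>z::'a::monoid_mult. z ^ Suc N = z"
    and "coprime e N" and "e > 0"
  shows "inj (\<lambda>z::'a. z ^ e)"
proof (rule injI)
  have power_1_plus_mult: "z ^ (1 + N * j) = z" for z :: 'a and j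
  proof (induction j)
    case (Suc j)
    have "z ^ (1 + N * Suc j) = z ^ ((1 + N * j) + N)"
      by (simp add: algebra_simps)
    also have "\<dots> = z ^ (1 + N * j) * z ^ N"
      by (rule power_add)
    also have "\<dots> = z ^ Suc N"
      by (simp only: Suc.IH power_Suc)
    finally show ?case
      by (simp only: period)
  qed simp
  obtain t j where "e * t = N * j + gcd e N"
    using bezout_nat[of e N] \<open>e > 0\<close> by auto
  then have "e * t = 1 + N * j"
    using \<open>coprime e N\<close> by (simp add: coprime_iff_gcd_eq_1)
  then have inverse: "(z ^ e) ^ t = z" for z :: 'a
    by (simp only: power_mult[symmetric] power_1_plus_mult)
  fix x y :: 'a
  assume "x ^ e = y ^ e"
  then have "(x ^ e) ^ t = (y ^ e) ^ t"
    by simp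
  then show "x = y"
    by (simp only: inverse)
qed

text \<open>\<open>Eis a b\<close> represents \<open>a + b \<omega>\<close> in \<open>'a[\<omega>] / (\<omega>\<^sup>2 + \<omega> + 1)\<close>.\<close>
datatype 'a eisenstein = Eis (eis_one: 'a) (eis_omega: 'a)

instantiation eisenstein :: (comm_ring_1) comm_ring_1
begin

definition "0 = Eis 0 0"
definition "1 = Eis 1 0"
definition "x + y = Eis (eis_one x + eis_one y) (eis_omega x + eis_omega y)"
definition "x - y = Eis (eis_one x - eis_one y) (eis_omega x - eis_omega y)"
definition "- x = Eis (- eis_one x) (- eis_omega x)"
definition "x * y = Eis (eis_one x * eis_one y - eis_omega x * eis_omega y)
  (eis_one x * eis_omega y + eis_omega x * eis_one y - eis_omega x * eis_omega y)"

instance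
  by standard (simp_all add: zero_eisenstein_def one_eisenstein_def plus_eisenstein_def
      minus_eisenstein_def uminus_eisenstein_def times_eisenstein_def algebra_simps)

end

lemma Eis_add: "Eis a b + Eis c d = Eis (a + c) (b + d)"
  by (simp add: plus_eisenstein_def)

lemma Eis_mult: "Eis a b * Eis c d = Eis (a * c - b * d) (a * d + b * c - b * d)"
  by (simp add: times_eisenstein_def)

lemma of_nat_eisenstein: "of_nat n = Eis (of_nat n) 0"
  by (induction n) (simp_all add: zero_eisenstein_def one_eisenstein_def Eis_add)

lemma CHAR_eisenstein [simp]: "CHAR('a::comm_ring_1 eisenstein) = CHAR('a)"
  by (rule CHAR_eqI) (simp_all add: of_nat_eisenstein zero_eisenstein_def of_nat_eq_0_iff_char_dvd)

lemma Eis_power_const: "Eis a 0 ^ n = Eis (a ^ n) (0::'a::comm_ring_1)"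
  by (induction n) (simp_all add: one_eisenstein_def Eis_mult)

lemma Eis_omega_power_mod_3: "Eis 0 (1::'a::comm_ring_1) ^ n = Eis 0 1 ^ (n mod 3)"
proof -
  have "Eis 0 (1::'a) ^ 3 = 1"
    by (simp add: numeral_3_eq_3 one_eisenstein_def Eis_mult)
  moreover have "Eis 0 (1::'a) ^ n = (Eis 0 1 ^ 3) ^ (n div 3) * Eis 0 1 ^ (n mod 3)"
    by (subst (1) div_mult_mod_eq[of n 3, symmetric]) (simp only: power_add power_mult mult.commute)
  ultimately show ?thesis
    by simp
qed

lemma Eis_power_Frobenius:
  fixes a b :: "'a::comm_ring_1"
  assumes "prime CHAR('a)" and "n = CHAR('a) ^ j" and "n mod 3 = 1"
  shows "Eis a b ^ n = Eis (a ^ n) (b ^ n)"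
proof -
  have "Eis a b = Eis a 0 + Eis 0 1 * Eis b 0"
    by (simp add: Eis_mult Eis_add)
  then have "Eis a b ^ n = Eis a 0 ^ n + Eis 0 1 ^ n * Eis b 0 ^ n"
    using assms(1,2) by (simp add: freshmans_dream' power_mult_distrib)
  also have "Eis 0 (1::'a) ^ n = Eis 0 1"
    using Eis_omega_power_mod_3[of n] assms(3) by simp
  finally show ?thesis
    by (simp add: Eis_power_const Eis_mult Eis_add)
qed

lemma Eis_power_two_power_plus_one:
  fixes a b :: "'a::comm_ring_1"
  assumes "CHAR('a) = 2" and "even L"
  shows "Eis b a ^ (2 ^ L + 1) =
    Eis (b ^ 2 ^ L * b + a ^ 2 ^ L * a) (b ^ 2 ^ L * a + a ^ 2 ^ L * b + a ^ 2 ^ L * a)"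
proof -
  have "(2::nat) ^ L mod 3 = 1"
    using \<open>even L\<close> by (auto elim!: evenE simp: power_mult power_mod[of 4, symmetric])
  then have "Eis b a ^ 2 ^ L = Eis (b ^ 2 ^ L) (a ^ 2 ^ L)"
    using assms(1) by (intro Eis_power_Frobenius) simp_all
  then show ?thesis
    using assms(1) by (simp add: Eis_mult minus_CHAR_2)
qed

section \<open>Finite fields\<close>

lemma CHAR_eq_if_card_eq_prime_power:
  assumes "prime p" and "card (UNIV :: 'a::{field,finite} set) = p ^ n"
  shows "CHAR('a) = p"
proof -
  have "CHAR('a) > 0"
    by (rule finite_imp_CHAR_pos) simp
  then have "prime CHAR('a)"
    by (rule prime_CHAR_semidom)
  moreover have "CHAR('a) dvd p ^ n"
    using CHAR_dvd_CARD[where 'a='a] assms(2) by simp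
  ultimately have "CHAR('a) dvd p"
    by (rule prime_dvd_power)
  then show ?thesis
    using \<open>prime CHAR('a)\<close> assms(1) by (simp add: primes_dvd_imp_eq)
qed

lemma power_card_minus_one_eq_1:
  fixes x :: "'a::{field,finite}"
  assumes "x \<noteq> 0"
  shows "x ^ (card (UNIV :: 'a set) - 1) = 1"
proof -
  define G :: "'a monoid" where "G = \<lparr>carrier = UNIV - {0}, monoid.mult = (*), one = 1\<rparr>"
  interpret G: group G
  proof (rule groupI)
    show "\<exists>y\<in>carrier G. y \<otimes>\<^bsub>G\<^esub> z = \<one>\<^bsub>G\<^esub>" if "z \<in> carrier G" for z
      using that by (intro bexI[of _ "inverse z"]) (auto simp: G_def)
  qed (auto simp: G_def)
  have "x [^]\<^bsub>G\<^esub> order G = \<one>\<^bsub>G\<^esub>"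
    using assms by (intro G.pow_order_eq_1) (simp add: G_def)
  moreover have "y [^]\<^bsub>G\<^esub> n = y ^ n" for y :: 'a and n
    by (induction n) (simp_all add: G_def)
  moreover have "order G = card (UNIV :: 'a set) - 1"
    by (simp add: order_def G_def card_Diff_singleton)
  moreover have "\<one>\<^bsub>G\<^esub> = 1"
    by (simp add: G_def)
  ultimately show ?thesis
    by simp
qed

lemma power_card_eq_self:
  fixes x :: "'a::{field,finite}"
  shows "x ^ card (UNIV :: 'a set) = x"
proof -
  have "card (UNIV :: 'a set) = Suc (card (UNIV :: 'a set) - 1)"
    using finite_UNIV_card_ge_0[where 'a='a] by simp
  then have "x ^ card (UNIV :: 'a set) = x * x ^ (card (UNIV :: 'a set) - 1)"
    by (metis power_Suc)
  then show ?thesis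
    using power_card_minus_one_eq_1[of x] by (cases "x = 0") simp_all
qed

lemma power_card_power_eq_self:
  fixes x :: "'a::{field,finite}"
  shows "x ^ card (UNIV :: 'a set) ^ j = x"
proof (induction j)
  case (Suc j)
  then show ?case
    by (simp only: power_Suc power_mult power_card_eq_self)
qed simp

lemma power_prime_power_cong:
  fixes x :: "'a::{field,finite}"
  assumes "card (UNIV :: 'a set) = p ^ n" and "[i = j] (mod n)"
  shows "x ^ p ^ i = x ^ p ^ j"
proof -
  have reduce: "x ^ p ^ i = x ^ p ^ (i mod n)" for i
  proof -
    have "p ^ i = p ^ (i mod n) * card (UNIV :: 'a set) ^ (i div n)"
      by (simp add: assms(1) flip: power_mult power_add)
    then show ?thesis
      by (simp add: power_mult power_card_power_eq_self)
  qed
  show ?thesis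
    using reduce[of i] reduce[of j] assms(2) by (simp add: cong_def)
qed

lemma card_le_Suc_if_roots_of_unity:
  assumes "m > 0" and "\<And>x::'a. x \<noteq> 0 \<Longrightarrow> x ^ m = 1"
  shows "card (UNIV :: 'a::{field,finite} set) \<le> Suc m"
proof -
  define P :: "'a poly" where "P = Polynomial.monom 1 m - 1"
  have "P \<noteq> 0"
    using \<open>m > 0\<close> by (auto simp: P_def monom_eq_1_iff)
  have "UNIV - {0} \<subseteq> {x. poly P x = 0}"
    using assms(2) by (auto simp: P_def poly_monom)
  then have "card (UNIV - {0::'a}) \<le> card {x. poly P x = 0}"
    by (intro card_mono) auto
  also have "\<dots> \<le> degree P"
    using \<open>P \<noteq> 0\<close> by (rule card_poly_roots_bound)
  also have "\<dots> \<le> m"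
    unfolding P_def by (rule order.trans[OF degree_diff_le_max]) (simp add: degree_monom_eq)
  finally show ?thesis
    by (simp add: card_Diff_singleton)
qed

lemma obtain_nontrivial_root_of_unity:
  assumes "d dvd card (UNIV :: 'a set) - 1" and "d > 1"
  obtains \<zeta> :: "'a::{field,finite}" where "\<zeta> \<noteq> 1" and "\<zeta> ^ d = 1"
proof -
  obtain m where m: "card (UNIV :: 'a set) - 1 = d * m"
    using assms(1) ..
  have "card (UNIV :: 'a set) \<ge> 2"
    using card_mono[of UNIV "{0::'a, 1}"] by simp
  then have "m > 0"
    using m by (cases m) auto
  have "\<exists>\<zeta>::'a. \<zeta> \<noteq> 1 \<and> \<zeta> ^ d = 1"
  proof (rule ccontr)
    assume "\<not> ?thesis"
    then have trivial_roots: "\<zeta> = 1" if "\<zeta> ^ d = 1" for \<zeta> :: 'a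
      using that by blast
    have "x ^ m = 1" if "x \<noteq> 0" for x :: 'a
    proof (rule trivial_roots)
      show "(x ^ m) ^ d = 1"
        using power_card_minus_one_eq_1[OF that, unfolded m]
        by (simp add: mult.commute flip: power_mult)
    qed
    then have "card (UNIV :: 'a set) \<le> Suc m"
      using \<open>m > 0\<close> by (intro card_le_Suc_if_roots_of_unity)
    then have "d * m \<le> 1 * m"
      using m by linarith
    then show False
      using \<open>d > 1\<close> \<open>m > 0\<close> by simp
  qed
  then show ?thesis
    using that by blast
qed

lemma obtain_power_neq_self:
  assumes "1 < n" and "n < card (UNIV :: 'a set)"
  obtains z :: "'a::{field,finite}" where "z ^ n \<noteq> z"
proof (rule ccontr)
  assume "\<not> thesis"
  then have fixed: "z ^ n = z" for z :: 'a
    using that by blast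
  obtain n' where n: "n = Suc n'"
    using \<open>1 < n\<close> less_imp_Suc_add by blast
  have "x ^ (n - 1) = 1" if "x \<noteq> 0" for x :: 'a
  proof -
    have "x * x ^ n' = x * 1"
      using fixed[of x] by (simp add: n)
    then show ?thesis
      using \<open>x \<noteq> 0\<close> n by simp
  qed
  then have "card (UNIV :: 'a set) \<le> Suc (n - 1)"
    using \<open>1 < n\<close> by (intro card_le_Suc_if_roots_of_unity) simp_all
  then show False
    using assms by linarith
qed

lemma inj_Eis_power_two_power_plus_one:
  assumes "CHAR('a::{field,finite}) = 2" and "card (UNIV :: 'a set) = 2 ^ n"
    and "coprime (2 ^ (2 * n) - 1) (2 ^ L + 1 :: nat)"
  shows "inj (\<lambda>z::'a eisenstein. z ^ (2 ^ L + 1))"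
proof (rule inj_power_if_coprime)
  show "z ^ Suc (2 ^ (2 * n) - 1) = z" for z :: "'a eisenstein"
  proof (cases z)
    case (Eis a b)
    have "(2::nat) ^ (2 * n) mod 3 = 1"
      by (simp add: power_mult power_mod[of 4, symmetric])
    then have "z ^ 2 ^ (2 * n) = Eis (a ^ 2 ^ (2 * n)) (b ^ 2 ^ (2 * n))"
      using assms(1) by (simp add: Eis Eis_power_Frobenius)
    moreover have "u ^ 2 ^ (2 * n) = u" for u :: 'a
      using power_card_power_eq_self[of u 2] by (simp add: assms(2) mult.commute power_mult)
    ultimately show ?thesis
      by (simp add: Eis)
  qed
  show "coprime (2 ^ L + 1) (2 ^ (2 * n) - 1 :: nat)"
    using assms(3) by (simp add: coprime_commute)
qed simp

section \<open>Frobenius and the trace\<close>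

lemma Frobenius_diff:
  fixes x y :: "'a::comm_ring_1"
  assumes "prime CHAR('a)" and "n = CHAR('a) ^ j"
  shows "(x - y) ^ n = x ^ n - y ^ n"
  using freshmans_dream'[OF assms, of "x - y" y] by (simp add: algebra_simps)

lemma inj_Frobenius:
  assumes "prime CHAR('a::idom)" and "n = CHAR('a) ^ j"
  shows "inj (\<lambda>x::'a. x ^ n)"
proof (rule injI)
  fix x y :: 'a
  assume "x ^ n = y ^ n"
  then have "(x - y) ^ n = 0"
    using assms by (simp add: Frobenius_diff)
  then show "x = y"
    by simp
qed

lemma Frobenius_differences_eq:
  fixes Z Z' :: "'a::comm_ring_1"
  assumes "prime CHAR('a)" and "q = CHAR('a) ^ k" and "(Z - Z') ^ q = Z - Z'"
  shows "Z ^ q - Z = Z' ^ q - Z'" and "Z ^ q\<^sup>2 - Z ^ q = Z' ^ q\<^sup>2 - Z' ^ q"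
proof -
  have "Z ^ q - Z' ^ q = Z - Z'"
    using assms by (simp add: Frobenius_diff)
  then show "Z ^ q - Z = Z' ^ q - Z'"
    by (simp add: algebra_simps)
  have "(Z - Z') ^ q\<^sup>2 = Z - Z'"
    using assms(3) by (simp add: power2_eq_square power_mult)
  then have "Z ^ q\<^sup>2 - Z' ^ q\<^sup>2 = Z ^ q - Z' ^ q"
    using assms(1,2) \<open>Z ^ q - Z' ^ q = Z - Z'\<close>
    by (simp add: Frobenius_diff[where j = "k * 2"] power_mult)
  then show "Z ^ q\<^sup>2 - Z ^ q = Z' ^ q\<^sup>2 - Z' ^ q"
    by (simp add: algebra_simps)
qed

lemma eq_if_Frobenius_difference_and_trace_eq:
  fixes x y :: "'a::idom"
  assumes "prime CHAR('a)" and "q = CHAR('a) ^ k" and "(3::'a) \<noteq> 0"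
    and "x ^ q - x = y ^ q - y" and "x ^ q\<^sup>2 + x ^ q + x = y ^ q\<^sup>2 + y ^ q + y"
  shows "x = y"
proof -
  define e where "e = x - y"
  have Frobenius_q: "(u - v) ^ q = u ^ q - v ^ q" for u v :: 'a
    using assms(1,2) by (rule Frobenius_diff)
  have "e ^ q = e"
    using assms(4) by (simp add: e_def Frobenius_q algebra_simps)
  then have "e ^ q\<^sup>2 = e"
    by (simp add: power2_eq_square power_mult)
  have "e ^ q\<^sup>2 + e ^ q + e = 0"
    using assms(5) by (simp add: e_def Frobenius_q power2_eq_square power_mult algebra_simps)
  then have "3 * e = 0"
    using \<open>e ^ q = e\<close> \<open>e ^ q\<^sup>2 = e\<close> by simp
  then show ?thesis
    using assms(3) by (simp add: e_def)
qed

lemma trace_Frobenius_difference_eq_0: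
  fixes x :: "'a::{field,finite}"
  assumes "prime CHAR('a)" and "q = CHAR('a) ^ k" and "card (UNIV :: 'a set) = q ^ 3"
  shows "(x ^ q - x) ^ q\<^sup>2 + (x ^ q - x) ^ q + (x ^ q - x) = 0"
proof -
  have "(u - v) ^ q = u ^ q - v ^ q" for u v :: 'a
    using assms(1,2) by (rule Frobenius_diff)
  then have "(x ^ q - x) ^ q\<^sup>2 + (x ^ q - x) ^ q + (x ^ q - x) = ((x ^ q) ^ q) ^ q - x"
    by (simp add: power2_eq_square power_mult)
  also have "((x ^ q) ^ q) ^ q = x"
    using power_card_eq_self[of x] assms(3) by (simp add: power3_eq_cube power_mult)
  finally show ?thesis
    by simp
qed

lemma Eis_power_trace_free:
  fixes a :: "'a::field"
  assumes "CHAR('a) = 2" and "Q = 2 ^ l" and "even L"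
    and "\<And>u::'a. u ^ 2 ^ L = u ^ Q" and "a ^ q\<^sup>2 + a ^ q + a = 0"
  shows "Eis (a ^ q) a ^ (2 ^ L + 1) =
    Eis ((a ^ (Q + 1)) ^ q - a ^ (Q + 1)) ((a ^ (Q + 1)) ^ q\<^sup>2 - (a ^ (Q + 1)) ^ q)"
proof -
  define b where "b = a ^ q"
  have commute: "(u ^ i) ^ j = (u ^ j) ^ i" for u :: 'a and i j
    by (simp only: power_mult[symmetric] mult.commute)
  have "a ^ q\<^sup>2 = - (b + a)"
    using assms(5) by (simp only: eq_neg_iff_add_eq_0 b_def add.assoc)
  also have "\<dots> = b + a"
    using assms(1) by (rule uminus_CHAR_2)
  finally have "a ^ q\<^sup>2 = b + a" .
  have "(a ^ (Q + 1)) ^ q\<^sup>2 = (a ^ q\<^sup>2) ^ (Q + 1)"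
    by (rule commute)
  also have "\<dots> = (b + a) ^ Q * (b + a)"
    by (simp only: \<open>a ^ q\<^sup>2 = b + a\<close> power_add power_one_right)
  also have "\<dots> = (b ^ Q + a ^ Q) * (b + a)"
    using assms(1,2) by (simp add: freshmans_dream')
  finally have second_power: "(a ^ (Q + 1)) ^ q\<^sup>2 = (b ^ Q + a ^ Q) * (b + a)" .
  have "(a ^ (Q + 1)) ^ q = b ^ (Q + 1)"
    unfolding b_def by (rule commute)
  then have first_power: "(a ^ (Q + 1)) ^ q = b ^ Q * b"
    by (simp only: power_add power_one_right)
  have "(a ^ (Q + 1)) ^ q - a ^ (Q + 1) = b ^ Q * b + a ^ (Q + 1)"
    unfolding first_power using assms(1) by (rule minus_CHAR_2)
  then have "(a ^ (Q + 1)) ^ q - a ^ (Q + 1) = b ^ Q * b + a ^ Q * a"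
    by (simp only: power_add power_one_right)
  moreover have "(a ^ (Q + 1)) ^ q\<^sup>2 - (a ^ (Q + 1)) ^ q = b ^ Q * a + a ^ Q * b + a ^ Q * a"
    unfolding first_power second_power by (simp add: algebra_simps)
  ultimately show ?thesis
    using Eis_power_two_power_plus_one[OF assms(1,3), of b a] by (simp add: assms(4) flip: b_def)
qed

section \<open>The polynomial \<open>f5\<close>\<close>

lemma f5_eq:
  fixes x :: "'a::field"
  assumes "prime CHAR('a)" and "Q = CHAR('a) ^ l" and "R = CHAR('a) ^ m"
  shows "f5 q Q R x = (x ^ q - x) ^ (Q + 1) + (x ^ q\<^sup>2 + x ^ q + x) ^ R"
proof -
  have "(x ^ q - x) ^ (Q + 1) = ((x ^ q) ^ Q - x ^ Q) * (x ^ q - x)"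
    using assms(1,2) by (simp add: Frobenius_diff)
  moreover have "(x ^ q\<^sup>2 + x ^ q + x) ^ R = (x ^ q\<^sup>2) ^ R + (x ^ q) ^ R + x ^ R"
    using assms(1,3) by (simp add: freshmans_dream')
  ultimately show ?thesis
    by (simp add: f5_def algebra_simps power_add flip: power_mult)
qed

lemma f5_mult_root_of_unity:
  fixes x \<zeta> :: "'a::field"
  assumes "prime CHAR('a)" and "Q = CHAR('a) ^ l" and "R = CHAR('a) ^ m"
    and "\<zeta> ^ q = \<zeta>" and "\<zeta> ^ (Q + 1) = 1" and "x ^ q\<^sup>2 + x ^ q + x = 0"
  shows "f5 q Q R (\<zeta> * x) = f5 q Q R x"
proof -
  have "\<zeta> ^ q\<^sup>2 = \<zeta>"
    using assms(4) by (simp add: power2_eq_square power_mult)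
  then have "(\<zeta> * x) ^ q - \<zeta> * x = \<zeta> * (x ^ q - x)"
    and "(\<zeta> * x) ^ q\<^sup>2 + (\<zeta> * x) ^ q + \<zeta> * x = \<zeta> * (x ^ q\<^sup>2 + x ^ q + x)"
    using assms(4) by (simp_all add: power_mult_distrib algebra_simps)
  then show ?thesis
    using assms(1-3,5,6) by (simp add: f5_eq power_mult_distrib zero_power)
qed

lemma obtain_root_of_unity_in_subfield:
  fixes q n :: nat
  assumes card: "card (UNIV :: 'a set) = q ^ 3" and "q > 1" and "\<not> coprime (q - 1) n"
  obtains \<zeta> :: "'a::{field,finite}" where "\<zeta> \<noteq> 1" and "\<zeta> ^ q = \<zeta>" and "\<zeta> ^ n = 1"
proof -
  define d where "d = gcd (q - 1) n"
  have "d > 1"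
    using assms(2,3) by (simp add: d_def coprime_iff_gcd_eq_1 nat_neq_iff)
  have "q ^ 3 - 1 = (q - 1) * (q\<^sup>2 + q + 1)"
    using \<open>q > 1\<close> by (cases q) (simp_all add: algebra_simps power2_eq_square power3_eq_cube)
  then have "d dvd card (UNIV :: 'a set) - 1"
    by (simp add: card d_def)
  then obtain \<zeta> :: 'a where "\<zeta> \<noteq> 1" and "\<zeta> ^ d = 1"
    using \<open>d > 1\<close> by (rule obtain_nontrivial_root_of_unity)
  have power_multiple: "\<zeta> ^ j = 1" if "d dvd j" for j
    using that \<open>\<zeta> ^ d = 1\<close> by (auto elim!: dvdE simp: power_mult)
  have "\<zeta> ^ (q - 1) = 1" and "\<zeta> ^ n = 1"
    by (rule power_multiple, simp add: d_def)+
  moreover from \<open>\<zeta> ^ (q - 1) = 1\<close> have "\<zeta> ^ q = \<zeta>"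
    using \<open>q > 1\<close> by (metis Suc_diff_1 less_trans power_Suc2 mult_1 zero_less_one)
  ultimately show ?thesis
    using that \<open>\<zeta> \<noteq> 1\<close> by blast
qed

lemma obtain_nonzero_trace_zero:
  assumes "prime CHAR('a)" and "q = CHAR('a) ^ k" and "k > 0"
    and card: "card (UNIV :: 'a set) = q ^ 3"
  obtains x :: "'a::{field,finite}" where "x \<noteq> 0" and "x ^ q\<^sup>2 + x ^ q + x = 0"
proof -
  have "q > 1"
    unfolding assms(2) using prime_gt_1_nat[OF assms(1)] assms(3) by (rule one_less_power)
  moreover have "q < card (UNIV :: 'a set)"
    using power_strict_increasing_iff[OF \<open>q > 1\<close>, of 1 3] by (simp add: card)
  ultimately obtain z :: 'a where "z ^ q \<noteq> z"
    by (rule obtain_power_neq_self)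
  have "(z ^ q - z) ^ q\<^sup>2 + (z ^ q - z) ^ q + (z ^ q - z) = 0"
    using assms(1,2) card by (rule trace_Frobenius_difference_eq_0)
  moreover have "z ^ q - z \<noteq> 0"
    using \<open>z ^ q \<noteq> z\<close> by simp
  ultimately show ?thesis
    using that by blast
qed

lemma not_inj_f5_if_not_coprime:
  fixes p k l m :: nat
  assumes "prime p" and "k > 0" and card: "card (UNIV :: 'a::{field,finite} set) = (p ^ k) ^ 3"
    and "\<not> coprime (p ^ k - 1) (p ^ l + 1)"
  shows "\<not> inj (f5 (p ^ k) (p ^ l) (p ^ m) :: 'a \<Rightarrow> 'a)"
proof
  assume inj: "inj (f5 (p ^ k) (p ^ l) (p ^ m) :: 'a \<Rightarrow> 'a)"
  have "card (UNIV :: 'a set) = p ^ (k * 3)"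
    using card by (simp add: power_mult)
  with assms(1) have "CHAR('a) = p"
    by (rule CHAR_eq_if_card_eq_prime_power)
  have "p ^ k > 1"
    using prime_gt_1_nat[OF assms(1)] assms(2) by (rule one_less_power)
  from card this assms(4) obtain \<zeta> :: 'a
    where "\<zeta> \<noteq> 1" and "\<zeta> ^ p ^ k = \<zeta>" and "\<zeta> ^ (p ^ l + 1) = 1"
    by (rule obtain_root_of_unity_in_subfield)
  obtain x :: 'a where "x \<noteq> 0" and "x ^ (p ^ k)\<^sup>2 + x ^ p ^ k + x = 0"
    using obtain_nonzero_trace_zero[of "p ^ k" k] assms(1,2) card \<open>CHAR('a) = p\<close> by auto
  then have "f5 (p ^ k) (p ^ l) (p ^ m) (\<zeta> * x) = f5 (p ^ k) (p ^ l) (p ^ m) x"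
    using \<open>CHAR('a) = p\<close> assms(1) \<open>\<zeta> ^ p ^ k = \<zeta>\<close> \<open>\<zeta> ^ (p ^ l + 1) = 1\<close>
    by (intro f5_mult_root_of_unity) simp_all
  then have "\<zeta> * x = x"
    using inj by (simp add: inj_eq)
  then show False
    using \<open>\<zeta> \<noteq> 1\<close> \<open>x \<noteq> 0\<close> by simp
qed

lemma f5_eq_imp_Frobenius_differences_eq:
  fixes x1 x2 :: "'a::{field,finite}"
  assumes "prime CHAR('a)" and "q = CHAR('a) ^ k" and "Q = CHAR('a) ^ l" and "R = CHAR('a) ^ m"
    and "card (UNIV :: 'a set) = q ^ 3" and "f5 q Q R x1 = f5 q Q R x2"
  defines "Z1 \<equiv> (x1 ^ q - x1) ^ (Q + 1)" and "Z2 \<equiv> (x2 ^ q - x2) ^ (Q + 1)"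
  shows "Z1 ^ q - Z1 = Z2 ^ q - Z2" and "Z1 ^ q\<^sup>2 - Z1 ^ q = Z2 ^ q\<^sup>2 - Z2 ^ q"
proof -
  define T :: "'a \<Rightarrow> 'a" where "T x = x ^ q\<^sup>2 + x ^ q + x" for x
  have "T x ^ q = T x" for x
  proof -
    have "T x ^ q = ((x ^ q) ^ q) ^ q + (x ^ q) ^ q + x ^ q"
      using assms(1,2) by (simp add: T_def freshmans_dream' power2_eq_square power_mult)
    also have "((x ^ q) ^ q) ^ q = x"
      using power_card_eq_self[of x] assms(5) by (simp add: power3_eq_cube power_mult)
    finally show ?thesis
      by (simp add: T_def power2_eq_square power_mult algebra_simps)
  qed
  then have T_power_fixed: "(T x ^ R) ^ q = T x ^ R" for x
    by (metis power_mult mult.commute)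
  have "Z1 - Z2 = T x2 ^ R - T x1 ^ R"
    using assms(6) assms(1,3,4) by (simp add: Z1_def Z2_def T_def f5_eq algebra_simps)
  moreover have "(u - v) ^ q = u ^ q - v ^ q" for u v :: 'a
    using assms(1,2) by (rule Frobenius_diff)
  ultimately have "(Z1 - Z2) ^ q = Z1 - Z2"
    by (simp add: T_power_fixed)
  with assms(1,2) show "Z1 ^ q - Z1 = Z2 ^ q - Z2" and "Z1 ^ q\<^sup>2 - Z1 ^ q = Z2 ^ q\<^sup>2 - Z2 ^ q"
    by (rule Frobenius_differences_eq)+
qed

lemma eq_if_f5_eq_and_Frobenius_difference_eq:
  fixes x1 x2 :: "'a::field"
  assumes "prime CHAR('a)" and "q = CHAR('a) ^ k" and "Q = CHAR('a) ^ l" and "R = CHAR('a) ^ m"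
    and "(3::'a) \<noteq> 0" and "f5 q Q R x1 = f5 q Q R x2" and "x1 ^ q - x1 = x2 ^ q - x2"
  shows "x1 = x2"
proof -
  have "inj (\<lambda>x::'a. x ^ R)"
    using assms(1,4) by (rule inj_Frobenius)
  moreover have "(x1 ^ q\<^sup>2 + x1 ^ q + x1) ^ R = (x2 ^ q\<^sup>2 + x2 ^ q + x2) ^ R"
    using assms(6) assms(1,3,4) by (simp add: f5_eq assms(7))
  ultimately have "x1 ^ q\<^sup>2 + x1 ^ q + x1 = x2 ^ q\<^sup>2 + x2 ^ q + x2"
    by (rule injD)
  with assms(1,2,5,7) show ?thesis
    by (rule eq_if_Frobenius_difference_and_trace_eq)
qed

lemma inj_f5_if_coprime_char_2:
  fixes k l m :: nat
  assumes "k > 0" and card: "card (UNIV :: 'a::{field,finite} set) = (2 ^ k) ^ 3"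
    and "coprime (2 ^ k - 1) (2 ^ l + 1 :: nat)"
  shows "inj (f5 (2 ^ k) (2 ^ l) (2 ^ m) :: 'a \<Rightarrow> 'a)"
proof (rule injI)
  define q Q R :: nat where "q = 2 ^ k" and "Q = 2 ^ l" and "R = 2 ^ m"
  have card_q: "card (UNIV :: 'a set) = q ^ 3" and card': "card (UNIV :: 'a set) = 2 ^ (3 * k)"
    using card by (simp_all add: q_def power_mult mult.commute)
  have char: "CHAR('a) = 2"
    using two_is_prime_nat card' by (rule CHAR_eq_if_card_eq_prime_power)
  have prime_char: "prime CHAR('a)"
    and char_powers: "q = CHAR('a) ^ k" "Q = CHAR('a) ^ l" "R = CHAR('a) ^ m"
    by (simp_all add: char q_def Q_def R_def)
  obtain L where "even L" and "[L = l] (mod 3 * k)"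
    and "coprime (2 ^ (2 * (3 * k)) - 1) (2 ^ L + 1 :: nat)"
    using assms(1,3) by (rule obtain_even_exponent_coprime) simp
  then have inj_Eis: "inj (\<lambda>z::'a eisenstein. z ^ (2 ^ L + 1))"
    using char card' by (intro inj_Eis_power_two_power_plus_one)
  have "u ^ 2 ^ L = u ^ Q" for u :: 'a
    using card' \<open>[L = l] (mod 3 * k)\<close> unfolding Q_def by (rule power_prime_power_cong)
  note Eis_power = Eis_power_trace_free[OF char Q_def \<open>even L\<close> this
      trace_Frobenius_difference_eq_0[OF prime_char char_powers(1) card_q]]
  fix x1 x2 :: 'a
  assume "f5 (2 ^ k) (2 ^ l) (2 ^ m) x1 = f5 (2 ^ k) (2 ^ l) (2 ^ m) x2"
  then have f5_eq: "f5 q Q R x1 = f5 q Q R x2"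
    by (simp only: q_def Q_def R_def)
  note differences = f5_eq_imp_Frobenius_differences_eq[OF prime_char char_powers card_q f5_eq]
  have "Eis ((x1 ^ q - x1) ^ q) (x1 ^ q - x1) ^ (2 ^ L + 1)
      = Eis ((x2 ^ q - x2) ^ q) (x2 ^ q - x2) ^ (2 ^ L + 1)"
    by (simp only: Eis_power differences)
  then have "Eis ((x1 ^ q - x1) ^ q) (x1 ^ q - x1) = Eis ((x2 ^ q - x2) ^ q) (x2 ^ q - x2)"
    by (rule injD[OF inj_Eis])
  then have "x1 ^ q - x1 = x2 ^ q - x2"
    by simp
  have "\<not> CHAR('a) dvd 3"
    using char by simp
  then have "(3::'a) \<noteq> 0"
    using of_nat_eq_0_iff_char_dvd[of 3, where 'a='a] by simp
  with prime_char char_powers show "x1 = x2"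
    using f5_eq \<open>x1 ^ q - x1 = x2 ^ q - x2\<close> by (rule eq_if_f5_eq_and_Frobenius_difference_eq)
qed

theorem corollary1p5:
  fixes p k l m :: nat
  assumes "prime p" and "k > 0"
    and "card (UNIV :: 'a::{field,finite} set) = (p ^ k) ^ 3"
  shows "(bij (f5 (p ^ k) (p ^ l) (p ^ m) :: 'a \<Rightarrow> 'a)
            \<longleftrightarrow> gcd (p ^ k - 1) (p ^ l + 1) = 1)
       \<and> (gcd (p ^ k - 1) (p ^ l + 1) = 1
            \<longleftrightarrow> p = 2 \<and> ord2 k \<le> ord2 l)"
proof
  show gcd_iff: "gcd (p ^ k - 1) (p ^ l + 1) = 1 \<longleftrightarrow> p = 2 \<and> ord2 k \<le> ord2 l"
    using coprime_prime_power_minus_one_plus_one_iff[OF assms(1,2)] unfolding coprime_iff_gcd_eq_1 .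
  show "bij (f5 (p ^ k) (p ^ l) (p ^ m) :: 'a \<Rightarrow> 'a) \<longleftrightarrow> gcd (p ^ k - 1) (p ^ l + 1) = 1"
  proof
    assume "bij (f5 (p ^ k) (p ^ l) (p ^ m) :: 'a \<Rightarrow> 'a)"
    then have "coprime (p ^ k - 1) (p ^ l + 1)"
      using not_inj_f5_if_not_coprime[OF assms] bij_is_inj by blast
    then show "gcd (p ^ k - 1) (p ^ l + 1) = 1"
      unfolding coprime_iff_gcd_eq_1 .
  next
    assume coprime: "gcd (p ^ k - 1) (p ^ l + 1) = 1"
    have "p = 2"
      using iffD1[OF gcd_iff coprime] by (rule conjunct1)
    have "inj (f5 (2 ^ k) (2 ^ l) (2 ^ m) :: 'a \<Rightarrow> 'a)"
      using assms(2,3) coprime unfolding \<open>p = 2\<close> coprime_iff_gcd_eq_1[symmetric]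
      by (rule inj_f5_if_coprime_char_2)
    then have "inj (f5 (p ^ k) (p ^ l) (p ^ m) :: 'a \<Rightarrow> 'a)"
      unfolding \<open>p = 2\<close> .
    then show "bij (f5 (p ^ k) (p ^ l) (p ^ m) :: 'a \<Rightarrow> 'a)"
      by (simp add: bij_def finite_UNIV_inj_surj)
  qed
qed

end
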